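(* The family $\mathcal{P}_L^+$ of strictly positive $L$-decomposable distributions on $S_n$ is the log-linear model $\mathcal{L}(\Phi_k\times\Psi:\ 1\le k\le n)$, and its number of free parameters is \[ b_n=\sum_{k=2}^n\binom{n}{k}(k-1)=2^n\left(\tfrac n2-1\right)+1. \]
   Context: $S_n$ is the group of permutations of $\{1,\ldots,n\}$. A distribution $p$ on $S_n$ is $L$-decomposable if a random permutation $\Pi\sim p$ satisfies, for every $2\le k\le n-2$ and $\pi\in S_n$, $P(\Pi(k+1)=\pi(k+1)\mid (\Pi(1),\ldots,\Pi(k))=(\pi(1),\ldots,\pi(k))) = P(\Pi(k+1)=\pi(k+1)\mid \{\Pi(1),\ldots,\Pi(k)\}=\{\pi(1),\ldots,\pi(k)\})$ whenever the left side is defined. A product partition of the $n\times n$ board is $\mathcal{B}=\mathcal{R}\times\mathcal{C}=(R_i\times C_j)$ with $\mathcal{R},\mathcal{C}$ partitions of $\{1,\ldots,n\}$; its marginal is $|\pi_{\mathcal{B}}|=(t_{ij})$, $t_{ij}=|\{s:(s,\pi(s))\in R_i\times C_j\}|$. $U^{\mathcal{B}}=\{v\in\mathbb{R}^{S_n}: |\pi_{\mathcal{B}}|=|\sigma_{\mathcal{B}}|\Rightarrow v(\pi)=v(\sigma)\}$. The log-linear model $\mathcal{L}(\mathcal{B}_1,\ldots,\mathcal{B}_s)$ is the set of strictly positive distributions $p$ on $S_n$ with $\log p\in U:=\mathrm{Span}(U^{\mathcal{B}_1},\ldots,U^{\mathcal{B}_s})$; its number of free parameters is $\dim U-1$. Bold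 sections: $\Phi_k=(\{1,\ldots,k-1\},\{k\},\{k+1,\ldots,n\})$ for $1\le k\le n$ (empty blocks omitted). Full partition: $\Psi=(\{1\},\ldots,\{n\})$. *)

theory Defs
  imports Complex_Main "HOL-Combinatorics.Permutations" "HOL-Library.Function_Algebras"
begin

type_synonym perm = "nat \<Rightarrow> nat"

definition Sym :: "nat \<Rightarrow> perm set" where
  "Sym n = {\<pi>. \<pi> permutes {1..n}}"

definition distribution :: "nat \<Rightarrow> (perm \<Rightarrow> real) \<Rightarrow> bool" where
  "distribution n p \<longleftrightarrow> (\<forall>\<pi>\<in>Sym n. p \<pi> \<ge> 0) \<and> (\<forall>\<pi>. \<pi> \<notin> Sym n \<longrightarrow> p \<pi> = 0)
      \<and> (\<Sum>\<pi>\<in>Sym n. p \<pi>) = 1"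

definition strictly_positive :: "nat \<Rightarrow> (perm \<Rightarrow> real) \<Rightarrow> bool" where
  "strictly_positive n p \<longleftrightarrow> distribution n p \<and> (\<forall>\<pi>\<in>Sym n. p \<pi> > 0)"

definition Pr :: "nat \<Rightarrow> (perm \<Rightarrow> real) \<Rightarrow> (perm \<Rightarrow> bool) \<Rightarrow> real" where
  "Pr n p E = (\<Sum>\<sigma>\<in>{\<sigma>\<in>Sym n. E \<sigma>}. p \<sigma>)"

definition cond_Pr :: "nat \<Rightarrow> (perm \<Rightarrow> real) \<Rightarrow> (perm \<Rightarrow> bool) \<Rightarrow> (perm \<Rightarrow> bool) \<Rightarrow> real" where
  "cond_Pr n p A B = Pr n p (\<lambda>\<sigma>. A \<sigma> \<and> B \<sigma>) / Pr n p B"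

text \<open>The conditioning events are
  (Pi(1),...,Pi(k)) = (pi(1),...,pi(k)) and {Pi(1),...,Pi(k)} = {pi(1),...,pi(k)};
  the left conditional probability is defined iff its conditioning event has positive probability.\<close>
definition L_decomposable :: "nat \<Rightarrow> (perm \<Rightarrow> real) \<Rightarrow> bool" where
  "L_decomposable n p \<longleftrightarrow>
     (\<forall>k \<pi>. 2 \<le> k \<and> k \<le> n - 2 \<and> \<pi> \<in> Sym n \<and>
        Pr n p (\<lambda>\<sigma>. \<forall>i\<in>{1..k}. \<sigma> i = \<pi> i) > 0 \<longrightarrow>
        cond_Pr n p (\<lambda>\<sigma>. \<sigma> (k+1) = \<pi> (k+1)) (\<lambda>\<sigma>. \<forall>i\<in>{1..k}. \<sigma> i = \<pi> i)
        = cond_Pr n p (\<lambda>\<sigma>. \<sigma> (k+1) = \<pi> (k+1)) (\<lambda>\<sigma>. \<sigma> ` {1..k} = \<pi> ` {1..k}))"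

text \<open>A product partition R x C of the board is given by two partitions R, C of {1..n}
  (as sets of blocks); the marginal of pi is the table t(A,B) = |{s \<in> A. pi s \<in> B}|.\<close>
definition marginal :: "nat set set \<Rightarrow> nat set set \<Rightarrow> perm \<Rightarrow> (nat set \<times> nat set \<Rightarrow> nat)" where
  "marginal R C \<pi> = (\<lambda>(A,B). if A \<in> R \<and> B \<in> C then card {s\<in>A. \<pi> s \<in> B} else 0)"

text \<open>Vectors in R^{S_n} are represented as functions perm => real vanishing outside S_n.\<close>
definition vecs :: "nat \<Rightarrow> (perm \<Rightarrow> real) set" where
  "vecs n = {v. \<forall>\<pi>. \<pi> \<notin> Sym n \<longrightarrow> v \<pi> = 0}"

definition U_part :: "nat \<Rightarrow> nat set set \<Rightarrow> nat set set \<Rightarrow> (perm \<Rightarrow> real) set" where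
  "U_part n R C = {v \<in> vecs n. \<forall>\<pi>\<in>Sym n. \<forall>\<sigma>\<in>Sym n.
       marginal R C \<pi> = marginal R C \<sigma> \<longrightarrow> v \<pi> = v \<sigma>}"

definition fscale :: "real \<Rightarrow> ('a \<Rightarrow> real) \<Rightarrow> ('a \<Rightarrow> real)" where
  "fscale c f = (\<lambda>x. c * f x)"

abbreviation fspan :: "('a \<Rightarrow> real) set \<Rightarrow> ('a \<Rightarrow> real) set" where
  "fspan \<equiv> module.span fscale"

abbreviation fdim :: "('a \<Rightarrow> real) set \<Rightarrow> nat" where
  "fdim \<equiv> vector_space.dim fscale"

definition U_model :: "nat \<Rightarrow> (nat set set \<times> nat set set) set \<Rightarrow> (perm \<Rightarrow> real) set" where
  "U_model n Bs = fspan (\<Union>(R,C)\<in>Bs. U_part n R C)"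

definition logp :: "nat \<Rightarrow> (perm \<Rightarrow> real) \<Rightarrow> (perm \<Rightarrow> real)" where
  "logp n p = (\<lambda>\<pi>. if \<pi> \<in> Sym n then ln (p \<pi>) else 0)"

definition loglinear_model :: "nat \<Rightarrow> (nat set set \<times> nat set set) set \<Rightarrow> (perm \<Rightarrow> real) set" where
  "loglinear_model n Bs = {p. strictly_positive n p \<and> logp n p \<in> U_model n Bs}"

definition Phi :: "nat \<Rightarrow> nat \<Rightarrow> nat set set" where
  "Phi n k = {A \<in> {{1..<k}, {k}, {k<..n}}. A \<noteq> {}}"

definition Psi :: "nat \<Rightarrow> nat set set" where
  "Psi n = (\<lambda>i. {i}) ` {1..n}"

end

theory Submission
  imports Defs "HOL-Library.FuncSet"
begin

(* A permutation \<pi> of {1..n} is read as the sequence \<pi>(1),...,\<pi>(n).  Call a function v on S_n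
   sequential if v(\<pi>) = \<Sum>m. w m (\<pi>{1..m-1}) (\<pi> m) for some w, i.e. a sum of terms each depending
   only on the set of values placed before position m and on the value placed at m.

   (1) The marginal of \<pi> for the product partition \<Phi>_m \<times> \<Psi> records exactly the pair
       (\<pi>{1..m-1}, \<pi> m).  Hence the space U = Span(U^{\<Phi>_m \<times> \<Psi>} : 1 \<le> m \<le> n) is the space of
       sequential functions.
   (2) This space has as basis the constant function together with the indicators
       [\<pi>{1..|S|} = S \<and> \<pi>(|S|+1) = j] for the pairs (S,j) in which j is not the maximum of
       S \<union> {j}.  Spanning is an induction on the size of a prefix set, independence an induction
       using permutations with prescribed prefixes.  Counting the pairs gives
       \<Sum>k. C(n,k)(k-1), which is then evaluated in closed form.
   (3) For strictly positive p, L-decomposability is equivalent to log p being sequential: log p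
       telescopes into the logarithms of the conditionals P(\<Pi>(m) | \<Pi>(1),...,\<Pi>(m-1)), which
       L-decomposability makes depend only on (\<pi>{1..m-1}, \<pi> m); conversely, if log p is
       sequential then p(\<pi>) factors as a term depending on (\<pi> 1,...,\<pi> k) times a term depending
       only on \<pi>{1..k} and \<pi>(k+1),...,\<pi>(n), and the first factor cancels in the conditionals. *)

lemma vector_space_fscale: "vector_space (fscale :: real \<Rightarrow> ('a \<Rightarrow> real) \<Rightarrow> _)"
  by unfold_locales (auto simp: fscale_def fun_eq_iff algebra_simps)

interpretation FV: vector_space "fscale :: real \<Rightarrow> ('a \<Rightarrow> real) \<Rightarrow> _"
  by (rule vector_space_fscale)

lemma sum_fun_apply: "(sum f A) x = (\<Sum>a\<in>A. f a x)" for f :: "'b \<Rightarrow> 'a \<Rightarrow> real"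
  by (induction A rule: infinite_finite_induct) auto

section \<open>Permutations of {1..n}\<close>

lemma Sym_permutes: "\<pi> \<in> Sym n \<Longrightarrow> \<pi> permutes {1..n}"
  by (simp add: Sym_def)

lemma Sym_inj: "\<pi> \<in> Sym n \<Longrightarrow> inj \<pi>"
  by (rule permutes_inj[OF Sym_permutes])

lemma Sym_out: "\<pi> \<in> Sym n \<Longrightarrow> i \<notin> {1..n} \<Longrightarrow> \<pi> i = i"
  by (rule permutes_not_in[OF Sym_permutes])

lemma Sym_image: "\<pi> \<in> Sym n \<Longrightarrow> \<pi> ` {1..n} = {1..n}"
  by (rule permutes_image[OF Sym_permutes])

lemma Sym_in: "\<pi> \<in> Sym n \<Longrightarrow> i \<in> {1..n} \<Longrightarrow> \<pi> i \<in> {1..n}"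
  using Sym_image by blast

lemma finite_Sym: "finite (Sym n)"
  unfolding Sym_def by (rule finite_permutations) simp

lemma id_Sym: "id \<in> Sym n"
  by (simp add: Sym_def permutes_id)

lemma Sym_eqI:
  assumes "\<pi> \<in> Sym n" "\<sigma> \<in> Sym n" "\<forall>i\<in>{1..n}. \<sigma> i = \<pi> i"
  shows "\<sigma> = \<pi>"
  using assms Sym_out by (metis ext)

lemma SymI:
  assumes "bij_betw \<pi> {1..n} {1..n}" "\<And>i. i \<notin> {1..n} \<Longrightarrow> \<pi> i = i"
  shows "\<pi> \<in> Sym n"
  unfolding Sym_def mem_Collect_eq by (rule bij_imp_permutes[OF assms])

lemma SymI_onto:
  assumes "\<pi> ` {1..n} = {1..n}" "\<And>i. i \<notin> {1..n} \<Longrightarrow> \<pi> i = i"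
  shows "\<pi> \<in> Sym n"
proof (rule SymI[OF _ assms(2)])
  have "inj_on \<pi> {1..n}"
    by (rule eq_card_imp_inj_on) (simp_all only: assms(1) finite_atLeastAtMost)
  thus "bij_betw \<pi> {1..n} {1..n}" using assms(1) by (simp add: bij_betw_def)
qed

lemma notin_prefix: "\<pi> \<in> Sym n \<Longrightarrow> \<pi> m \<notin> \<pi> ` {1..<m}"
  using Sym_inj by (fastforce simp: inj_eq)

lemma card_prefix: "\<pi> \<in> Sym n \<Longrightarrow> card (\<pi> ` {1..<m}) = m - 1"
  using inj_on_subset[OF Sym_inj subset_UNIV] by (simp add: card_image)

lemma prefix_subset: "\<pi> \<in> Sym n \<Longrightarrow> m \<le> n + 1 \<Longrightarrow> \<pi> ` {1..<m} \<subseteq> {1..n}"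
  using Sym_in by fastforce

lemma Sym_eqI_init:
  assumes p: "\<pi> \<in> Sym n" and s: "\<sigma> \<in> Sym n" and agree: "\<forall>i\<in>{1..<n}. \<sigma> i = \<pi> i"
  shows "\<sigma> = \<pi>"
proof (rule Sym_eqI[OF p s], intro ballI)
  fix i assume i: "i \<in> {1..n}"
  show "\<sigma> i = \<pi> i"
  proof (cases "i = n")
    case True
    have "\<sigma> ` {1..<n} = \<pi> ` {1..<n}" using agree by (intro image_cong) auto
    hence "\<sigma> n \<notin> \<pi> ` {1..<n}" using notin_prefix[OF s, of n] by simp
    moreover have "\<sigma> n \<in> \<pi> ` {1..n}" using Sym_in[OF s i] True Sym_image[OF p] by simp
    moreover have "{1..n} = insert n {1..<n}" using i True by auto
    ultimately show ?thesis using True by auto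
  qed (use i agree in auto)
qed

lemma splice_Sym:
  assumes p: "\<pi> \<in> Sym n" and s: "\<sigma> \<in> Sym n" and k: "k \<le> n"
    and eq: "\<pi> ` {1..k} = \<sigma> ` {1..k}"
  shows "(\<lambda>i. if i \<in> {1..k} then \<pi> i else \<sigma> i) \<in> Sym n" (is "?t \<in> _")
proof (rule SymI_onto)
  have U: "{1..n} = {1..k} \<union> {k<..n}" using k by auto
  have "?t ` {1..n} = \<pi> ` {1..k} \<union> \<sigma> ` {k<..n}" unfolding U by (auto simp: image_Un)
  also have "\<dots> = \<sigma> ` {1..n}" using eq U by (simp add: image_Un)
  finally show "?t ` {1..n} = {1..n}" using Sym_image[OF s] by simp
  show "i \<notin> {1..n} \<Longrightarrow> ?t i = i" for i using k Sym_out[OF s] by auto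
qed

lemma exists_perm_prefix:
  assumes S: "S \<subseteq> {1..n}" and j: "j \<in> {1..n}" "j \<notin> S"
  shows "\<exists>\<pi>\<in>Sym n. \<pi> ` {1..<card S + 1} = S \<and> \<pi> (card S + 1) = j"
proof -
  define xs where "xs = sorted_list_of_set S @ [j] @ sorted_list_of_set ({1..n} - S - {j})"
  have finS: "finite S" using S finite_subset by blast
  have dxs: "distinct xs" using j finS unfolding xs_def by auto
  have sxs: "set xs = {1..n}" using S j finS unfolding xs_def by auto
  have lxs: "length xs = n" using distinct_card[OF dxs] sxs by simp
  define \<pi> where "\<pi> i = (if i \<in> {1..n} then xs ! (i - 1) else i)" for i
  have image_nth: "(\<lambda>i. ys ! (i - 1)) ` {1..m} = (\<lambda>i. ys ! i) ` {..<m}" for ys :: "nat list" and m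
    by (simp only: image_Suc_lessThan[symmetric] image_image diff_Suc_1)
  have "\<pi> ` {1..n} = set xs"
    using lxs image_nth[of xs n] by (auto simp: \<pi>_def set_conv_nth image_iff)
  hence P: "\<pi> \<in> Sym n" using sxs by (intro SymI_onto) (auto simp: \<pi>_def)
  have cS: "card S + 1 \<le> n"
    using card_mono[of "{1..n}" "insert j S"] S j finS by simp
  have "\<pi> ` {1..<card S + 1} = (\<lambda>i. xs ! (i - 1)) ` {1..card S}"
    using cS by (intro image_cong) (auto simp: \<pi>_def)
  also have "\<dots> = (\<lambda>i. sorted_list_of_set S ! i) ` {..<card S}"
    unfolding image_nth by (intro image_cong) (auto simp: xs_def nth_append)
  also have "\<dots> = set (sorted_list_of_set S)" by (auto simp: set_conv_nth)
  also have "\<dots> = S" using finS by simp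
  finally show ?thesis using P cS by (intro bexI[of _ \<pi>]) (auto simp: \<pi>_def xs_def nth_append)
qed

section \<open>Marginals for the product partitions \<Phi>_k \<times> \<Psi>\<close>

lemma card_hits_singleton:
  "inj \<pi> \<Longrightarrow> card {s\<in>A. \<pi> s \<in> {j}} = (if j \<in> \<pi> ` A then 1 else 0)"
proof (cases "j \<in> \<pi> ` A")
  case True
  then obtain s0 where s0: "s0 \<in> A" "j = \<pi> s0" by blast
  assume "inj \<pi>"
  hence "{s\<in>A. \<pi> s \<in> {j}} = {s0}" using s0 by (auto dest: injD)
  thus ?thesis using True by simp
qed (auto simp: card_eq_0_iff)

lemma marginal_Psi_eq_iff:
  assumes p: "\<pi> \<in> Sym n" and s: "\<sigma> \<in> Sym n" and R: "\<forall>A\<in>R. A \<subseteq> {1..n}"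
  shows "marginal R (Psi n) \<pi> = marginal R (Psi n) \<sigma> \<longleftrightarrow> (\<forall>A\<in>R. \<pi> ` A = \<sigma> ` A)"
proof -
  have cell: "marginal R (Psi n) \<rho> (A, {j}) = (if j \<in> \<rho> ` A then 1 else 0)"
    if "\<rho> \<in> Sym n" "A \<in> R" "j \<in> {1..n}" for \<rho> A j
    using that card_hits_singleton[OF Sym_inj[OF that(1)]] by (simp add: marginal_def Psi_def)
  have image_sub: "\<rho> ` A \<subseteq> {1..n}" if "\<rho> \<in> Sym n" "A \<in> R" for \<rho> A
    using that R Sym_in by blast
  have "marginal R (Psi n) \<pi> = marginal R (Psi n) \<sigma> \<longleftrightarrow>
        (\<forall>A\<in>R. \<forall>j\<in>{1..n}. marginal R (Psi n) \<pi> (A, {j}) = marginal R (Psi n) \<sigma> (A, {j}))"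
  proof
    assume cells: "\<forall>A\<in>R. \<forall>j\<in>{1..n}. marginal R (Psi n) \<pi> (A, {j}) = marginal R (Psi n) \<sigma> (A, {j})"
    show "marginal R (Psi n) \<pi> = marginal R (Psi n) \<sigma>"
    proof (rule ext, clarify)
      fix A B
      show "marginal R (Psi n) \<pi> (A, B) = marginal R (Psi n) \<sigma> (A, B)"
        using cells by (cases "A \<in> R \<and> B \<in> Psi n") (auto simp: marginal_def Psi_def)
    qed
  qed simp
  also have "\<dots> \<longleftrightarrow> (\<forall>A\<in>R. \<forall>j\<in>{1..n}. j \<in> \<pi> ` A \<longleftrightarrow> j \<in> \<sigma> ` A)"
    by (intro ball_cong refl) (simp add: cell p s)
  also have "\<dots> \<longleftrightarrow> (\<forall>A\<in>R. \<pi> ` A = \<sigma> ` A)"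
  proof (intro ball_cong refl iffI)
    fix A assume A: "A \<in> R" and e: "\<forall>j\<in>{1..n}. j \<in> \<pi> ` A \<longleftrightarrow> j \<in> \<sigma> ` A"
    show "\<pi> ` A = \<sigma> ` A" using e image_sub[OF p A] image_sub[OF s A] by blast
  qed simp
  finally show ?thesis .
qed

lemma Phi_images_eq_iff:
  assumes p: "\<pi> \<in> Sym n" and s: "\<sigma> \<in> Sym n" and k: "k \<in> {1..n}"
  shows "(\<forall>A\<in>Phi n k. \<pi> ` A = \<sigma> ` A) \<longleftrightarrow> \<pi> ` {1..<k} = \<sigma> ` {1..<k} \<and> \<pi> k = \<sigma> k"
proof
  assume eq: "\<forall>A\<in>Phi n k. \<pi> ` A = \<sigma> ` A"
  have "\<pi> ` {1..<k} = \<sigma> ` {1..<k}"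
    using eq by (cases "{1..<k} = {}") (auto simp: Phi_def)
  moreover have "{k} \<in> Phi n k" by (simp add: Phi_def)
  hence "\<pi> k = \<sigma> k" using eq by (metis image_empty image_insert singleton_inject)
  ultimately show "\<pi> ` {1..<k} = \<sigma> ` {1..<k} \<and> \<pi> k = \<sigma> k" ..
next
  assume eq: "\<pi> ` {1..<k} = \<sigma> ` {1..<k} \<and> \<pi> k = \<sigma> k"
  have "{1..k} = insert k {1..<k}" using k by auto
  hence init: "\<pi> ` {1..k} = \<sigma> ` {1..k}" using eq by simp
  have D: "{k<..n} = {1..n} - {1..k}" using k by auto
  have "\<pi> ` {k<..n} = \<sigma> ` {k<..n}"
    unfolding D image_set_diff[OF Sym_inj[OF p]] image_set_diff[OF Sym_inj[OF s]]
    using init Sym_image[OF p] Sym_image[OF s] by simp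
  thus "\<forall>A\<in>Phi n k. \<pi> ` A = \<sigma> ` A" using eq by (auto simp: Phi_def)
qed

lemma marginal_Phi_Psi_eq_iff:
  assumes p: "\<pi> \<in> Sym n" and s: "\<sigma> \<in> Sym n" and k: "k \<in> {1..n}"
  shows "marginal (Phi n k) (Psi n) \<pi> = marginal (Phi n k) (Psi n) \<sigma> \<longleftrightarrow>
         \<pi> ` {1..<k} = \<sigma> ` {1..<k} \<and> \<pi> k = \<sigma> k"
proof -
  have "\<forall>A\<in>Phi n k. A \<subseteq> {1..n}" using k by (auto simp: Phi_def)
  thus ?thesis using marginal_Psi_eq_iff[OF p s] Phi_images_eq_iff[OF p s k] by simp
qed

section \<open>The space U is the space of sequential functions\<close>

definition seq_space :: "nat \<Rightarrow> (perm \<Rightarrow> real) set" where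
  "seq_space n = {v \<in> vecs n.
     \<exists>w. \<forall>\<pi>\<in>Sym n. v \<pi> = (\<Sum>m\<in>{1..n}. w m (\<pi> ` {1..<m}) (\<pi> m))}"

definition pos_ind :: "nat \<Rightarrow> nat \<Rightarrow> nat set \<Rightarrow> nat \<Rightarrow> perm \<Rightarrow> real" where
  "pos_ind n m S j = (\<lambda>\<pi>. if \<pi> \<in> Sym n \<and> \<pi> ` {1..<m} = S \<and> \<pi> m = j then 1 else 0)"

lemma pos_ind_in_U_part:
  assumes m: "m \<in> {1..n}"
  shows "pos_ind n m S j \<in> U_part n (Phi n m) (Psi n)"
  using marginal_Phi_Psi_eq_iff[OF _ _ m] by (auto simp: U_part_def vecs_def pos_ind_def)

text \<open>A function in U^{\<Phi>_m \<times> \<Psi>} is sequential with only the m-th summand non-zero.\<close>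

lemma U_part_subset_seq_space:
  assumes m: "m \<in> {1..n}"
  shows "U_part n (Phi n m) (Psi n) \<subseteq> seq_space n"
proof
  fix v assume v: "v \<in> U_part n (Phi n m) (Psi n)"
  define pick where "pick S j = (SOME \<sigma>. \<sigma> \<in> Sym n \<and> \<sigma> ` {1..<m} = S \<and> \<sigma> m = j)" for S j
  define w where "w m' S j = (if m' = m then v (pick S j) else 0)" for m' S j
  have "v \<pi> = (\<Sum>m'\<in>{1..n}. w m' (\<pi> ` {1..<m'}) (\<pi> m'))" if p: "\<pi> \<in> Sym n" for \<pi>
  proof -
    let ?s = "pick (\<pi> ` {1..<m}) (\<pi> m)"
    have s: "?s \<in> Sym n \<and> ?s ` {1..<m} = \<pi> ` {1..<m} \<and> ?s m = \<pi> m"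
      unfolding pick_def by (rule someI[of _ \<pi>]) (simp add: p)
    hence "marginal (Phi n m) (Psi n) ?s = marginal (Phi n m) (Psi n) \<pi>"
      using marginal_Phi_Psi_eq_iff[OF _ p m, of ?s] by simp
    hence "v ?s = v \<pi>" using v p s unfolding U_part_def by blast
    thus ?thesis using m by (simp add: w_def)
  qed
  hence "\<exists>w. \<forall>\<pi>\<in>Sym n. v \<pi> = (\<Sum>m'\<in>{1..n}. w m' (\<pi> ` {1..<m'}) (\<pi> m'))" by blast
  moreover have "v \<in> vecs n" using v by (simp add: U_part_def)
  ultimately show "v \<in> seq_space n" by (simp add: seq_space_def)
qed

lemma seq_space_subspace: "FV.subspace (seq_space n)"
  unfolding FV.subspace_def
proof (intro conjI ballI allI)
  show "0 \<in> seq_space n"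
    by (auto simp: seq_space_def vecs_def intro: exI[of _ "\<lambda>_ _ _. 0"])
  fix x y assume "x \<in> seq_space n" "y \<in> seq_space n"
  then obtain w1 w2 where
    "\<forall>\<pi>\<in>Sym n. x \<pi> = (\<Sum>m\<in>{1..n}. w1 m (\<pi> ` {1..<m}) (\<pi> m))"
    "\<forall>\<pi>\<in>Sym n. y \<pi> = (\<Sum>m\<in>{1..n}. w2 m (\<pi> ` {1..<m}) (\<pi> m))"
    "x \<in> vecs n" "y \<in> vecs n"
    unfolding seq_space_def by blast
  thus "x + y \<in> seq_space n" unfolding seq_space_def vecs_def
    by (auto simp: sum.distrib intro!: exI[of _ "\<lambda>m S j. w1 m S j + w2 m S j"])
next
  fix c and x :: "perm \<Rightarrow> real" assume "x \<in> seq_space n"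
  then obtain w where
    "\<forall>\<pi>\<in>Sym n. x \<pi> = (\<Sum>m\<in>{1..n}. w m (\<pi> ` {1..<m}) (\<pi> m))" "x \<in> vecs n"
    unfolding seq_space_def by blast
  thus "fscale c x \<in> seq_space n" unfolding seq_space_def vecs_def
    by (auto simp: fscale_def sum_distrib_left intro!: exI[of _ "\<lambda>m S j. c * w m S j"])
qed

lemma seq_space_expand:
  assumes v: "v \<in> seq_space n"
  shows "\<exists>w. v = (\<Sum>m\<in>{1..n}. \<Sum>S\<in>Pow {1..n}. \<Sum>j\<in>{1..n}. fscale (w m S j) (pos_ind n m S j))"
proof -
  from v obtain w where w: "\<forall>\<pi>\<in>Sym n. v \<pi> = (\<Sum>m\<in>{1..n}. w m (\<pi> ` {1..<m}) (\<pi> m))"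
    and v0: "v \<in> vecs n" unfolding seq_space_def by blast
  have "v \<pi> = (\<Sum>m\<in>{1..n}. \<Sum>S\<in>Pow {1..n}. \<Sum>j\<in>{1..n}. w m S j * pos_ind n m S j \<pi>)" for \<pi>
  proof (cases "\<pi> \<in> Sym n")
    case False thus ?thesis using v0 by (simp add: pos_ind_def vecs_def)
  next
    case p: True
    have "(\<Sum>S\<in>Pow {1..n}. \<Sum>j\<in>{1..n}. w m S j * pos_ind n m S j \<pi>) = w m (\<pi> ` {1..<m}) (\<pi> m)"
      if m: "m \<in> {1..n}" for m
    proof -
      have "\<pi> ` {1..<m} \<in> Pow {1..n}" using prefix_subset[OF p, of m] m by simp
      moreover have "\<pi> m \<in> {1..n}" using Sym_in[OF p m] .
      moreover have "pos_ind n m S j \<pi> =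
          (if j = \<pi> m then if S = \<pi> ` {1..<m} then 1 else 0 else 0)" for S j
        by (auto simp: pos_ind_def p)
      ultimately show ?thesis by (simp add: if_distrib[of "\<lambda>x. _ * x"] sum.delta' cong: if_cong)
    qed
    thus ?thesis using w p by simp
  qed
  hence "v = (\<Sum>m\<in>{1..n}. \<Sum>S\<in>Pow {1..n}. \<Sum>j\<in>{1..n}. fscale (w m S j) (pos_ind n m S j))"
    by (intro ext) (simp add: sum_fun_apply fscale_def)
  thus ?thesis by blast
qed

lemma seq_space_subset_span:
  assumes "\<And>m S j. m \<in> {1..n} \<Longrightarrow> pos_ind n m S j \<in> FV.span X"
  shows "seq_space n \<subseteq> FV.span X"
proof
  fix v assume "v \<in> seq_space n"
  then obtain w where
    "v = (\<Sum>m\<in>{1..n}. \<Sum>S\<in>Pow {1..n}. \<Sum>j\<in>{1..n}. fscale (w m S j) (pos_ind n m S j))"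
    using seq_space_expand by blast
  also have "\<dots> \<in> FV.span X"
    by (intro FV.span_sum FV.span_scale assms)
  finally show "v \<in> FV.span X" .
qed

theorem U_model_eq_seq_space: "U_model n ((\<lambda>k. (Phi n k, Psi n)) ` {1..n}) = seq_space n"
proof -
  have "(\<Union>(R,C)\<in>(\<lambda>k. (Phi n k, Psi n)) ` {1..n}. U_part n R C)
        = (\<Union>k\<in>{1..n}. U_part n (Phi n k) (Psi n))"
    by auto
  moreover have "FV.span (\<Union>k\<in>{1..n}. U_part n (Phi n k) (Psi n)) = seq_space n"
  proof (rule FV.span_subspace[OF _ _ seq_space_subspace])
    show "(\<Union>k\<in>{1..n}. U_part n (Phi n k) (Psi n)) \<subseteq> seq_space n"
      using U_part_subset_seq_space by blast
    show "seq_space n \<subseteq> FV.span (\<Union>k\<in>{1..n}. U_part n (Phi n k) (Psi n))"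
      by (rule seq_space_subset_span) (use pos_ind_in_U_part in \<open>blast intro: FV.span_base\<close>)
  qed
  ultimately show ?thesis by (simp add: U_model_def)
qed

section \<open>A basis of the sequential space\<close>

definition const_one :: "nat \<Rightarrow> perm \<Rightarrow> real" where
  "const_one n = (\<lambda>\<pi>. if \<pi> \<in> Sym n then 1 else 0)"

definition step_ind :: "nat \<Rightarrow> nat set \<times> nat \<Rightarrow> perm \<Rightarrow> real" where
  "step_ind n e = pos_ind n (card (fst e) + 1) (fst e) (snd e)"

definition nonmax_pairs :: "nat \<Rightarrow> (nat set \<times> nat) set" where
  "nonmax_pairs n = {(S,j). S \<subseteq> {1..n} \<and> j \<in> {1..n} \<and> j \<notin> S \<and> (\<exists>s\<in>S. j < s)}"

definition seq_basis :: "nat \<Rightarrow> (perm \<Rightarrow> real) set" where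
  "seq_basis n = insert (const_one n) (step_ind n ` nonmax_pairs n)"

definition prefix_ind :: "nat \<Rightarrow> nat set \<Rightarrow> perm \<Rightarrow> real" where
  "prefix_ind n T = (\<lambda>\<pi>. if \<pi> \<in> Sym n \<and> \<pi> ` {1..card T} = T then 1 else 0)"

lemma finite_nonmax_pairs: "finite (nonmax_pairs n)"
proof -
  have "nonmax_pairs n \<subseteq> Pow {1..n} \<times> {1..n}" by (auto simp: nonmax_pairs_def)
  thus ?thesis by (rule finite_subset) simp
qed

lemma finite_seq_basis: "finite (seq_basis n)"
  by (simp add: seq_basis_def finite_nonmax_pairs)

lemma step_ind_apply:
  "step_ind n (S,j) \<pi> =
     (if \<pi> \<in> Sym n \<and> \<pi> ` {1..<card S + 1} = S \<and> \<pi> (card S + 1) = j then 1 else 0)"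
  by (simp add: step_ind_def pos_ind_def)

lemma card_insert_le:
  assumes "S \<subseteq> {1..n}" "j \<in> {1..n}" "j \<notin> S"
  shows "card S + 1 \<le> n"
  using card_mono[of "{1..n}" "insert j S"] assms finite_subset[of S "{1..n}"] by simp

lemma pos_ind_eq_0:
  assumes m: "m \<in> {1..n}"
    and invalid: "\<not> (S \<subseteq> {1..n} \<and> j \<in> {1..n} \<and> j \<notin> S \<and> card S + 1 = m)"
  shows "pos_ind n m S j = 0"
proof -
  have "pos_ind n m S j \<pi> = 0" for \<pi>
  proof (rule ccontr)
    assume "pos_ind n m S j \<pi> \<noteq> 0"
    hence p: "\<pi> \<in> Sym n" and S: "\<pi> ` {1..<m} = S" and j: "\<pi> m = j"
      by (auto simp: pos_ind_def split: if_splits)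
    have "S \<subseteq> {1..n}" using prefix_subset[OF p, of m] m S by simp
    moreover have "j \<in> {1..n}" using Sym_in[OF p m] j by simp
    moreover have "j \<notin> S" using notin_prefix[OF p, of m] S j by simp
    moreover have "card S + 1 = m" using card_prefix[OF p, of m] S m by simp
    ultimately show False using invalid by blast
  qed
  thus ?thesis by (simp add: fun_eq_iff)
qed

lemma prefix_ind_sum_next:
  assumes T: "T \<subseteq> {1..n}" and c: "card T < n"
  shows "prefix_ind n T = (\<Sum>x\<in>{1..n} - T. step_ind n (T,x))"
proof (rule ext)
  fix \<pi>
  have e: "{1..<card T + 1} = {1..card T}" by auto
  show "prefix_ind n T \<pi> = (\<Sum>x\<in>{1..n} - T. step_ind n (T,x)) \<pi>"
  proof (cases "\<pi> \<in> Sym n \<and> \<pi> ` {1..card T} = T")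
    case False
    hence "step_ind n (T,x) \<pi> = 0" for x
      by (auto simp: step_ind_apply atLeastLessThanSuc_atLeastAtMost)
    thus ?thesis using False by (simp add: prefix_ind_def sum_fun_apply)
  next
    case True
    hence p: "\<pi> \<in> Sym n" and P: "\<pi> ` {1..card T} = T" by auto
    have "\<pi> (card T + 1) \<in> {1..n} - T"
      using Sym_in[OF p] c notin_prefix[OF p, of "card T + 1"] P e by simp
    moreover have "step_ind n (T,x) \<pi> = (if x = \<pi> (card T + 1) then 1 else 0)" for x
      using P p by (auto simp: step_ind_apply atLeastLessThanSuc_atLeastAtMost)
    ultimately show ?thesis using True by (simp add: prefix_ind_def sum_fun_apply)
  qed
qed

lemma prefix_ind_sum_last:
  assumes T: "T \<subseteq> {1..n}" and ne: "T \<noteq> {}"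
  shows "prefix_ind n T = (\<Sum>j\<in>T. step_ind n (T - {j}, j))"
proof (rule ext)
  fix \<pi>
  have fT: "finite T" using T finite_subset by blast
  let ?c = "card T"
  have c1: "?c \<ge> 1" using fT ne by (simp add: Suc_le_eq card_gt_0_iff)
  have cj: "card (T - {j}) + 1 = ?c" if "j \<in> T" for j using that fT c1 by simp
  show "prefix_ind n T \<pi> = (\<Sum>j\<in>T. step_ind n (T - {j}, j)) \<pi>"
  proof (cases "\<pi> \<in> Sym n")
    case False thus ?thesis by (simp add: prefix_ind_def sum_fun_apply step_ind_apply)
  next
    case p: True
    have "{1..?c} = insert ?c {1..<?c}" using c1 by auto
    hence ins: "\<pi> ` {1..?c} = insert (\<pi> ?c) (\<pi> ` {1..<?c})" by simp
    have last: "\<pi> ` {1..?c} = T \<longleftrightarrow> \<pi> ?c \<in> T \<and> \<pi> ` {1..<?c} = T - {\<pi> ?c}"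
      unfolding ins using notin_prefix[OF p, of ?c] by blast
    have "step_ind n (T - {j}, j) \<pi> =
        (if j = \<pi> ?c then (if \<pi> ` {1..<?c} = T - {\<pi> ?c} then 1 else 0) else 0)"
      if "j \<in> T" for j
      unfolding step_ind_apply cj[OF that] by (cases "j = \<pi> ?c") (simp_all add: p)
    hence "(\<Sum>j\<in>T. step_ind n (T - {j}, j)) \<pi>
        = (if \<pi> ?c \<in> T then (if \<pi> ` {1..<?c} = T - {\<pi> ?c} then 1 else 0) else 0)"
      using fT by (simp add: sum_fun_apply sum.delta')
    thus ?thesis using p last by (simp add: prefix_ind_def)
  qed
qed

lemma prefix_ind_full: "prefix_ind n {1..n} = const_one n"
proof (rule ext)
  show "prefix_ind n {1..n} \<pi> = const_one n \<pi>" for \<pi>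
    using Sym_image[of \<pi> n] by (simp add: prefix_ind_def const_one_def)
qed

text \<open>If the prefix indicator of S \<union> {j} is in the span of the basis, so is step_ind n (S,j):
  for j maximal, it is that prefix indicator minus basis vectors (prefix_ind_sum_last).\<close>

lemma step_ind_in_span:
  assumes S: "S \<subseteq> {1..n}" and j: "j \<in> {1..n}" "j \<notin> S"
    and I: "prefix_ind n (insert j S) \<in> FV.span (seq_basis n)"
  shows "step_ind n (S,j) \<in> FV.span (seq_basis n)"
proof (cases "(S,j) \<in> nonmax_pairs n")
  case True thus ?thesis by (intro FV.span_base) (simp add: seq_basis_def)
next
  case False
  hence max: "\<forall>s\<in>S. s < j" using S j by (auto simp: nonmax_pairs_def not_less_iff_gr_or_eq)
  let ?T = "insert j S"
  have fS: "finite S" using S finite_subset by blast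
  have "prefix_ind n ?T = (\<Sum>i\<in>?T. step_ind n (?T - {i}, i))"
    by (rule prefix_ind_sum_last) (use S j in auto)
  also have "\<dots> = step_ind n (S, j) + (\<Sum>i\<in>S. step_ind n (?T - {i}, i))"
    using fS j(2) by (simp add: insert_Diff_if)
  finally have eq: "step_ind n (S,j) = prefix_ind n ?T - (\<Sum>i\<in>S. step_ind n (?T - {i}, i))"
    by simp
  have "step_ind n (?T - {i}, i) \<in> FV.span (seq_basis n)" if i: "i \<in> S" for i
  proof (rule FV.span_base)
    have "(?T - {i}, i) \<in> nonmax_pairs n" unfolding nonmax_pairs_def using i S j max by auto
    thus "step_ind n (?T - {i}, i) \<in> seq_basis n" by (simp add: seq_basis_def)
  qed
  hence "(\<Sum>i\<in>S. step_ind n (?T - {i}, i)) \<in> FV.span (seq_basis n)" by (rule FV.span_sum)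
  thus ?thesis unfolding eq using I by (rule FV.span_diff[rotated])
qed

text \<open>Prefix indicators lie in the span, by downward induction on the size of the prefix.\<close>

lemma prefix_ind_in_span: "T \<subseteq> {1..n} \<Longrightarrow> prefix_ind n T \<in> FV.span (seq_basis n)"
proof (induction "n - card T" arbitrary: T rule: less_induct)
  case less
  note T = less.prems
  have fT: "finite T" using T finite_subset by blast
  show ?case
  proof (cases "card T < n")
    case False
    hence "T = {1..n}" using card_subset_eq[OF _ T] card_mono[OF _ T] by simp
    thus ?thesis using prefix_ind_full by (simp add: seq_basis_def FV.span_base)
  next
    case c: True
    have "step_ind n (T,x) \<in> FV.span (seq_basis n)" if x: "x \<in> {1..n} - T" for x
    proof (rule step_ind_in_span)
      show "prefix_ind n (insert x T) \<in> FV.span (seq_basis n)"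
        using x fT c T by (intro less.hyps) auto
    qed (use x T in auto)
    hence "(\<Sum>x\<in>{1..n} - T. step_ind n (T,x)) \<in> FV.span (seq_basis n)" by (rule FV.span_sum)
    thus ?thesis using prefix_ind_sum_next[OF T c] by simp
  qed
qed

text \<open>Every pos_ind is a step indicator or zero, hence in the span.\<close>

lemma pos_ind_in_span:
  assumes m: "m \<in> {1..n}"
  shows "pos_ind n m S j \<in> FV.span (seq_basis n)"
proof (cases "S \<subseteq> {1..n} \<and> j \<in> {1..n} \<and> j \<notin> S \<and> card S + 1 = m")
  case True
  hence "pos_ind n m S j = step_ind n (S,j)" by (simp add: step_ind_def)
  thus ?thesis using True by (auto intro!: step_ind_in_span prefix_ind_in_span)
next
  case False thus ?thesis using pos_ind_eq_0[OF m] FV.span_zero by simp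
qed

lemma seq_basis_subset: assumes n: "n \<ge> 1" shows "seq_basis n \<subseteq> seq_space n"
proof -
  have "const_one n \<in> U_part n (Phi n 1) (Psi n)"
    by (auto simp: U_part_def vecs_def const_one_def)
  hence "const_one n \<in> seq_space n" using U_part_subset_seq_space[of 1 n] n by auto
  moreover have "step_ind n e \<in> seq_space n" if E: "e \<in> nonmax_pairs n" for e
  proof -
    obtain S j where e: "e = (S,j)" "S \<subseteq> {1..n}" "j \<in> {1..n}" "j \<notin> S"
      using E by (cases e) (auto simp: nonmax_pairs_def)
    hence "card S + 1 \<in> {1..n}" using card_insert_le by auto
    hence "pos_ind n (card S + 1) S j \<in> seq_space n"
      using pos_ind_in_U_part U_part_subset_seq_space by blast
    thus ?thesis using e(1) by (simp add: step_ind_def)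
  qed
  ultimately show ?thesis by (auto simp: seq_basis_def)
qed

theorem span_seq_basis: "n \<ge> 1 \<Longrightarrow> FV.span (seq_basis n) = seq_space n"
  by (rule FV.span_subspace[OF seq_basis_subset seq_space_subset_span[OF pos_ind_in_span]
        seq_space_subspace])

text \<open>Suppose c0 + \<Sum>e. c e \<cdot> step_ind n e vanishes on S_n.  At a
  permutation \<pi> this relation reads c0 + \<Sum>m. coef \<pi> m = 0, where coef \<pi> m is the coefficient
  of the pair (\<pi>{1..m-1}, \<pi> m) observed at position m.  Splicing shows that the partial sums
  \<Sum>m\<le>k. coef \<pi> m depend only on the set \<pi>{1..k}; choosing the maximum of that set last shows
  that they vanish, and then every coefficient vanishes.\<close>

locale basis_relation =
  fixes n :: nat and c0 :: real and c :: "nat set \<times> nat \<Rightarrow> real"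
  assumes n: "n \<ge> 1"
    and relation: "\<forall>\<pi>\<in>Sym n. c0 + (\<Sum>e\<in>nonmax_pairs n. c e * step_ind n e \<pi>) = 0"
begin

definition coef :: "perm \<Rightarrow> nat \<Rightarrow> real" where
  "coef \<pi> m = (if (\<pi> ` {1..<m}, \<pi> m) \<in> nonmax_pairs n then c (\<pi> ` {1..<m}, \<pi> m) else 0)"

definition partial :: "perm \<Rightarrow> nat \<Rightarrow> real" where
  "partial \<pi> k = (\<Sum>m\<in>{1..k}. coef \<pi> m)"

text \<open>Each permutation observes exactly one pair at each position, so the relation at \<pi> is
  a sum over positions.\<close>

lemma relation_by_positions:
  assumes p: "\<pi> \<in> Sym n"
  shows "(\<Sum>e\<in>nonmax_pairs n. c e * step_ind n e \<pi>) = (\<Sum>m\<in>{1..n}. coef \<pi> m)"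
proof -
  define key where "key m = (\<pi> ` {1..<m}, \<pi> m)" for m
  define P where "P = {m\<in>{1..n}. key m \<in> nonmax_pairs n}"
  define observed where
    "observed e \<longleftrightarrow> \<pi> ` {1..<card (fst e) + 1} = fst e \<and> \<pi> (card (fst e) + 1) = snd e" for e
  have inj_key: "inj_on key P"
    using Sym_inj[OF p] by (auto intro!: inj_onI simp: key_def inj_eq)
  have "(\<Sum>m\<in>{1..n}. coef \<pi> m) = (\<Sum>m\<in>P. c (key m))"
    unfolding coef_def P_def key_def by (rule sum.inter_filter[symmetric]) simp
  also have "\<dots> = (\<Sum>e\<in>key ` P. c e)" by (simp add: sum.reindex[OF inj_key])
  also have "key ` P = {e\<in>nonmax_pairs n. observed e}"
  proof (intro equalityI subsetI)
    fix e assume "e \<in> key ` P"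
    then obtain m where m: "m \<in> {1..n}" "key m \<in> nonmax_pairs n" "e = key m" by (auto simp: P_def)
    have "card (\<pi> ` {1..<m}) + 1 = m" using card_prefix[OF p, of m] m(1) by simp
    thus "e \<in> {e\<in>nonmax_pairs n. observed e}" using m by (simp add: observed_def key_def)
  next
    fix e assume e: "e \<in> {e\<in>nonmax_pairs n. observed e}"
    obtain S j where Sj: "e = (S,j)" "S \<subseteq> {1..n}" "j \<in> {1..n}" "j \<notin> S"
      using e by (cases e) (auto simp: nonmax_pairs_def)
    hence "card S + 1 \<in> {1..n}" "key (card S + 1) = e"
      using card_insert_le e by (auto simp: key_def observed_def)
    thus "e \<in> key ` P" using e by (auto simp: P_def intro!: image_eqI[of _ _ "card S + 1"])
  qed
  also have "(\<Sum>e\<in>{e\<in>nonmax_pairs n. observed e}. c e)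
      = (\<Sum>e\<in>nonmax_pairs n. if observed e then c e else 0)"
    by (simp add: sum.inter_filter finite_nonmax_pairs)
  also have "\<dots> = (\<Sum>e\<in>nonmax_pairs n. c e * step_ind n e \<pi>)"
    by (intro sum.cong refl) (auto simp: observed_def step_ind_def pos_ind_def p)
  finally show ?thesis ..
qed

lemma total: "\<pi> \<in> Sym n \<Longrightarrow> c0 + (\<Sum>m\<in>{1..n}. coef \<pi> m) = 0"
  using relation relation_by_positions by simp

lemma partial_Suc: "partial \<rho> (Suc k) = partial \<rho> k + coef \<rho> (Suc k)"
  by (simp add: partial_def)

text \<open>The partial sums depend only on the set of the first k values: splice the first k
  entries of \<pi> onto \<sigma>; the remaining summands agree with those of \<sigma>, and the totals vanish.\<close>

lemma partial_prefix_invariant: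
  assumes p: "\<pi> \<in> Sym n" and s: "\<sigma> \<in> Sym n" and k: "k \<le> n"
    and eq: "\<pi> ` {1..k} = \<sigma> ` {1..k}"
  shows "partial \<pi> k = partial \<sigma> k"
proof -
  define \<tau> where "\<tau> = (\<lambda>i. if i \<in> {1..k} then \<pi> i else \<sigma> i)"
  have t: "\<tau> \<in> Sym n" unfolding \<tau>_def by (rule splice_Sym[OF p s k eq])
  have split: "(\<Sum>m\<in>{1..n}. coef \<rho> m) = partial \<rho> k + (\<Sum>m\<in>{k<..n}. coef \<rho> m)" for \<rho>
  proof -
    have "{1..n} = {1..k} \<union> {k<..n}" using k by auto
    thus ?thesis unfolding partial_def by (simp add: sum.union_disjoint ivl_disj_int)
  qed
  have "coef \<tau> m = coef \<pi> m" if "m \<in> {1..k}" for m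
  proof -
    have "\<tau> ` {1..<m} = \<pi> ` {1..<m}" "\<tau> m = \<pi> m"
      using that by (auto simp: \<tau>_def intro!: image_cong)
    thus ?thesis unfolding coef_def by (simp only:)
  qed
  hence head: "partial \<tau> k = partial \<pi> k" unfolding partial_def by simp
  have "coef \<tau> m = coef \<sigma> m" if m: "m \<in> {k<..n}" for m
  proof -
    have "{1..<m} = {1..k} \<union> {k<..<m}" using m by auto
    moreover have "\<tau> ` {1..k} = \<sigma> ` {1..k}" using eq by (auto simp: \<tau>_def intro!: image_cong)
    moreover have "\<tau> ` {k<..<m} = \<sigma> ` {k<..<m}" by (auto simp: \<tau>_def intro!: image_cong)
    ultimately have "\<tau> ` {1..<m} = \<sigma> ` {1..<m}" by (simp only: image_Un)
    moreover have "\<tau> m = \<sigma> m" using m by (simp add: \<tau>_def)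
    ultimately show ?thesis unfolding coef_def by (simp only:)
  qed
  hence "(\<Sum>m\<in>{k<..n}. coef \<tau> m) = (\<Sum>m\<in>{k<..n}. coef \<sigma> m)" by simp
  thus ?thesis using total[OF t] total[OF s] split[of \<tau>] split[of \<sigma>] head by simp
qed

text \<open>A partial sum over a non-empty prefix set T vanishes: realise T with its maximum last;
  that last pair is not in nonmax_pairs, so it contributes nothing, and induct on |T|.\<close>

lemma partial_eq_0:
  assumes "T \<subseteq> {1..n}" "T \<noteq> {}" "\<pi> \<in> Sym n" "\<pi> ` {1..card T} = T"
  shows "partial \<pi> (card T) = 0"
  using assms
proof (induction "card T" arbitrary: T \<pi> rule: less_induct)
  case less
  have fT: "finite T" using less.prems(1) finite_subset by blast
  show ?case
  proof (cases "card T = 1")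
    case True
    thus ?thesis by (simp add: partial_def coef_def nonmax_pairs_def)
  next
    case False
    moreover have "card T > 0" using fT less.prems(2) by (simp add: card_gt_0_iff)
    ultimately have c2: "card T \<ge> 2" by linarith
    define x where "x = Max T"
    define S where "S = T - {x}"
    have xT: "x \<in> T" using Max_in[OF fT less.prems(2)] by (simp add: x_def)
    have cS: "card S + 1 = card T" using xT fT c2 by (simp add: S_def)
    have "S \<noteq> {}"
    proof
      assume "S = {}"
      hence "card T = 1" using cS by simp
      thus False using c2 by simp
    qed
    hence S: "S \<subseteq> {1..n}" "S \<noteq> {}" using less.prems(1) by (auto simp: S_def)
    have x: "x \<in> {1..n}" "x \<notin> S" using xT less.prems(1) by (auto simp: S_def)
    obtain \<rho> where r: "\<rho> \<in> Sym n" "\<rho> ` {1..<card S + 1} = S" "\<rho> (card S + 1) = x"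
      using exists_perm_prefix[OF S(1) x] by blast
    have "{1..card T} = insert (card S + 1) {1..<card S + 1}" using cS by auto
    hence rT: "\<rho> ` {1..card T} = T" using r xT by (auto simp: S_def)
    have "\<forall>s\<in>S. s < x" using fT by (auto simp: S_def x_def less_le)
    hence "(S, x) \<notin> nonmax_pairs n" by (auto simp: nonmax_pairs_def)
    hence "coef \<rho> (card T) = 0" using r cS[symmetric] by (simp add: coef_def)
    moreover have "partial \<rho> (card S) = 0"
      using S r less.hyps[of S \<rho>] cS by (simp add: atLeastLessThanSuc_atLeastAtMost)
    moreover have "partial \<pi> (card T) = partial \<rho> (card T)"
      using partial_prefix_invariant[OF less.prems(3) r(1)] less.prems card_mono[OF _ less.prems(1)]
        rT by simp
    ultimately show ?thesis using partial_Suc[of \<rho> "card S"] cS by simp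
  qed
qed

text \<open>The identity permutation gives c0 = - partial id n = 0.\<close>

lemma c0_eq_0: "c0 = 0"
  using partial_eq_0[of "{1..n}" id] n id_Sym total[OF id_Sym] by (simp add: partial_def)

text \<open>Realise S followed by j; then c (S,j) is the difference of two vanishing partial sums.\<close>

lemma c_eq_0:
  assumes e: "e \<in> nonmax_pairs n"
  shows "c e = 0"
proof -
  obtain S j where Sj: "e = (S,j)" "S \<subseteq> {1..n}" "j \<in> {1..n}" "j \<notin> S" "S \<noteq> {}"
    using e by (cases e) (auto simp: nonmax_pairs_def)
  obtain \<rho> where r: "\<rho> \<in> Sym n" "\<rho> ` {1..<card S + 1} = S" "\<rho> (card S + 1) = j"
    using exists_perm_prefix[OF Sj(2-4)] by blast
  have cT: "card (insert j S) = card S + 1" using Sj finite_subset by fastforce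
  have "{1..card (insert j S)} = insert (card S + 1) {1..<card S + 1}" using cT by auto
  hence "partial \<rho> (card (insert j S)) = 0"
    using Sj r by (intro partial_eq_0) auto
  moreover have "partial \<rho> (card S) = 0"
    using Sj r by (intro partial_eq_0) (auto simp: atLeastLessThanSuc_atLeastAtMost)
  moreover have "coef \<rho> (card S + 1) = c e" using r e Sj by (simp add: coef_def)
  ultimately show ?thesis using partial_Suc[of \<rho> "card S"] cT by simp
qed

end

lemma basis_relation_trivial:
  assumes "n \<ge> 1" and "\<forall>\<pi>\<in>Sym n. c0 + (\<Sum>e\<in>nonmax_pairs n. c e * step_ind n e \<pi>) = 0"
  shows "c0 = 0 \<and> (\<forall>e\<in>nonmax_pairs n. c e = 0)"
proof -
  interpret basis_relation n c0 c using assms by unfold_locales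
  show ?thesis using c0_eq_0 c_eq_0 by blast
qed

lemma inj_step_ind:
  assumes n: "n \<ge> 1"
  shows "inj_on (step_ind n) (nonmax_pairs n)"
proof (rule inj_onI, rule ccontr)
  fix e1 e2 assume e: "e1 \<in> nonmax_pairs n" "e2 \<in> nonmax_pairs n"
    and eq: "step_ind n e1 = step_ind n e2" and ne: "e1 \<noteq> e2"
  define c where "c e = (if e = e1 then 1 else if e = e2 then -1 else (0::real))" for e
  have "(\<Sum>e\<in>nonmax_pairs n. c e * step_ind n e \<pi>) = step_ind n e1 \<pi> - step_ind n e2 \<pi>" for \<pi>
  proof -
    have "(\<Sum>e\<in>nonmax_pairs n. c e * step_ind n e \<pi>)
        = (\<Sum>e\<in>nonmax_pairs n. (if e = e1 then step_ind n e1 \<pi> else 0)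
                               + (if e = e2 then - step_ind n e2 \<pi> else 0))"
      using ne by (intro sum.cong refl) (auto simp: c_def)
    thus ?thesis using e finite_nonmax_pairs by (simp add: sum.distrib)
  qed
  hence "c e1 = 0" using basis_relation_trivial[OF n, of 0 c] e(1) eq by simp
  thus False by (simp add: c_def)
qed

lemma const_one_notin:
  assumes n: "n \<ge> 1"
  shows "const_one n \<notin> step_ind n ` nonmax_pairs n"
proof
  assume "const_one n \<in> step_ind n ` nonmax_pairs n"
  then obtain e0 where e0: "e0 \<in> nonmax_pairs n" "const_one n = step_ind n e0" by blast
  define c where "c e = (if e = e0 then -1 else (0::real))" for e
  have "(\<Sum>e\<in>nonmax_pairs n. c e * step_ind n e \<pi>)
      = (\<Sum>e\<in>nonmax_pairs n. if e = e0 then - step_ind n e0 \<pi> else 0)" for \<pi>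
    by (intro sum.cong refl) (simp add: c_def)
  hence "(\<Sum>e\<in>nonmax_pairs n. c e * step_ind n e \<pi>) = - step_ind n e0 \<pi>" for \<pi>
    using e0 finite_nonmax_pairs by simp
  moreover have "step_ind n e0 \<pi> = 1" if "\<pi> \<in> Sym n" for \<pi>
    using that e0(2) by (metis const_one_def)
  ultimately have "\<forall>\<pi>\<in>Sym n. 1 + (\<Sum>e\<in>nonmax_pairs n. c e * step_ind n e \<pi>) = 0" by simp
  thus False using basis_relation_trivial[OF n, of 1 c] by simp
qed

lemma independent_seq_basis:
  assumes n: "n \<ge> 1"
  shows "FV.independent (seq_basis n)"
proof (rule FV.independent_if_scalars_zero[OF finite_seq_basis])
  fix f :: "(perm \<Rightarrow> real) \<Rightarrow> real" and x
  assume zero: "(\<Sum>x\<in>seq_basis n. fscale (f x) x) = 0" and x: "x \<in> seq_basis n"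
  have split: "(\<Sum>x\<in>seq_basis n. fscale (f x) x) = fscale (f (const_one n)) (const_one n)
      + (\<Sum>e\<in>nonmax_pairs n. fscale (f (step_ind n e)) (step_ind n e))"
    by (simp add: seq_basis_def finite_nonmax_pairs const_one_notin[OF n]
        sum.reindex[OF inj_step_ind[OF n]])
  have "\<forall>\<pi>\<in>Sym n. f (const_one n) + (\<Sum>e\<in>nonmax_pairs n. f (step_ind n e) * step_ind n e \<pi>) = 0"
  proof
    fix \<pi> assume p: "\<pi> \<in> Sym n"
    have "(fscale (f (const_one n)) (const_one n)
        + (\<Sum>e\<in>nonmax_pairs n. fscale (f (step_ind n e)) (step_ind n e))) \<pi> = 0"
      using zero unfolding split by (simp only: zero_fun_apply)
    thus "f (const_one n) + (\<Sum>e\<in>nonmax_pairs n. f (step_ind n e) * step_ind n e \<pi>) = 0"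
      using p by (simp add: sum_fun_apply fscale_def const_one_def)
  qed
  from basis_relation_trivial[OF n this]
  show "f x = 0" using x by (auto simp: seq_basis_def)
qed

lemma card_seq_basis:
  assumes n: "n \<ge> 1"
  shows "card (seq_basis n) = card (nonmax_pairs n) + 1"
  using const_one_notin[OF n] card_image[OF inj_step_ind[OF n]]
  by (simp add: seq_basis_def finite_nonmax_pairs)

theorem dim_seq_space:
  assumes n: "n \<ge> 1"
  shows "fdim (seq_space n) = card (nonmax_pairs n) + 1"
proof -
  have "fdim (seq_space n) = fdim (seq_basis n)"
    using FV.dim_span[of "seq_basis n"] span_seq_basis[OF n] by simp
  also have "\<dots> = card (seq_basis n)"
    by (rule FV.dim_eq_card_independent[OF independent_seq_basis[OF n]])
  finally show ?thesis using card_seq_basis[OF n] by simp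
qed

section \<open>Counting the basis\<close>

lemma card_non_maximal:
  fixes T :: "nat set"
  assumes fT: "finite T"
  shows "card {j\<in>T. \<exists>s\<in>T. j < s} = card T - 1"
proof (cases "T = {}")
  case False
  have "{j\<in>T. \<exists>s\<in>T. j < s} = T - {Max T}"
  proof (intro equalityI subsetI)
    fix j assume "j \<in> T - {Max T}"
    hence "j < Max T" using Max_ge[OF fT, of j] by auto
    thus "j \<in> {j\<in>T. \<exists>s\<in>T. j < s}" using \<open>j \<in> T - {Max T}\<close> Max_in[OF fT False] by auto
  qed (use fT in \<open>auto simp: not_less dest: Max_ge\<close>)
  thus ?thesis using Max_in[OF fT False] fT by simp
qed simp

lemma sum_Pow_card:
  fixes f :: "nat \<Rightarrow> nat"
  assumes A: "finite A"
  shows "(\<Sum>T\<in>Pow A. f (card T)) = (\<Sum>k\<le>card A. (card A choose k) * f k)"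
proof -
  have "(\<Sum>T\<in>Pow A. f (card T)) = (\<Sum>k\<le>card A. \<Sum>T\<in>{T. T \<in> Pow A \<and> card T = k}. f (card T))"
    using A by (intro sum.group[symmetric]) (auto intro: card_mono)
  also have "\<dots> = (\<Sum>k\<le>card A. (card A choose k) * f k)"
  proof (rule sum.cong[OF refl])
    fix k
    have "(\<Sum>T\<in>{T. T \<in> Pow A \<and> card T = k}. f (card T)) = card {T. T \<subseteq> A \<and> card T = k} * f k"
      by simp
    thus "(\<Sum>T\<in>{T. T \<in> Pow A \<and> card T = k}. f (card T)) = (card A choose k) * f k"
      by (simp add: n_subsets[OF A])
  qed
  finally show ?thesis .
qed

text \<open>(S,j) \<mapsto> (S \<union> {j}, j) identifies the pairs with the sets T \<subseteq> {1..n} together with a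
  non-maximal element of T.\<close>

lemma card_nonmax_pairs: "card (nonmax_pairs n) = (\<Sum>k\<le>n. (n choose k) * (k - 1))"
proof -
  define E' where "E' = Sigma (Pow {1..n}) (\<lambda>T. {j\<in>T. \<exists>s\<in>T. j < s})"
  have "bij_betw (\<lambda>(S,j). (insert j S, j)) (nonmax_pairs n) E'"
    by (rule bij_betw_byWitness[where f' = "\<lambda>(T,j). (T - {j}, j)"])
       (auto simp: nonmax_pairs_def E'_def)
  hence "card (nonmax_pairs n) = card E'" by (rule bij_betw_same_card)
  also have "\<dots> = (\<Sum>T\<in>Pow {1..n}. card {j\<in>T. \<exists>s\<in>T. j < s})"
    unfolding E'_def by (rule card_SigmaI) (auto intro: finite_subset)
  also have "\<dots> = (\<Sum>T\<in>Pow {1..n}. card T - 1)"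
    by (intro sum.cong refl card_non_maximal) (auto intro: finite_subset)
  also have "\<dots> = (\<Sum>k\<le>n. (n choose k) * (k - 1))"
    using sum_Pow_card[of "{1..n}" "\<lambda>k. k - 1"] by simp
  finally show ?thesis .
qed

text \<open>The same count in the form of the main theorem (terms k < 2 vanish).\<close>

lemma card_nonmax_pairs_int:
  "int (card (nonmax_pairs n)) = (\<Sum>k=2..n. int (n choose k) * (int k - 1))"
proof -
  have "(\<Sum>k\<le>n. (n choose k) * (k - 1)) = (\<Sum>k=2..n. (n choose k) * (k - 1))"
    by (rule sum.mono_neutral_right) auto
  hence "int (card (nonmax_pairs n)) = (\<Sum>k=2..n. int ((n choose k) * (k - 1)))"
    unfolding card_nonmax_pairs by (simp only: of_nat_sum)
  also have "\<dots> = (\<Sum>k=2..n. int (n choose k) * (int k - 1))"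
    by (rule sum.cong[OF refl]) (auto simp: of_nat_diff)
  finally show ?thesis .
qed

text \<open>Closed form, from \<Sum>k. C(n,k) = 2^n and \<Sum>k. k C(n,k) = n 2^(n-1).\<close>

lemma nonmax_count_closed_form:
  assumes n: "n \<ge> 1"
  shows "real_of_int (\<Sum>k=2..n. int (n choose k) * (int k - 1)) = 2 ^ n * (real n / 2 - 1) + 1"
proof -
  define F where "F k = int (n choose k) * (int k - 1)" for k
  have "{..n} = insert 0 (insert 1 {2..n})" using n by auto
  hence "(\<Sum>k\<le>n. F k) = F 0 + (F 1 + (\<Sum>k=2..n. F k))" by simp
  hence low: "(\<Sum>k=2..n. F k) = (\<Sum>k\<le>n. F k) + 1" by (simp add: F_def)
  have "(\<Sum>k\<le>n. F k) = (\<Sum>k\<le>n. int (k * (n choose k))) - (\<Sum>k\<le>n. int (n choose k))"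
    by (simp add: F_def algebra_simps sum_subtractf)
  also have "\<dots> = int (n * 2 ^ (n - 1)) - int (2 ^ n)"
    by (simp only: of_nat_sum[symmetric] choose_linear_sum choose_row_sum)
  finally have "(\<Sum>k=2..n. F k) = int n * 2 ^ (n - 1) - 2 ^ n + 1" using low by simp
  hence "real_of_int (\<Sum>k=2..n. F k) = real n * 2 ^ (n - 1) - 2 ^ n + 1" by simp
  also have "\<dots> = 2 ^ n * (real n / 2 - 1) + 1"
    using n by (simp add: power_eq_if algebra_simps)
  finally show ?thesis by (simp add: F_def)
qed

section \<open>Strictly positive distributions: L-decomposable iff log p is sequential\<close>

lemma sum_ratio_by_classes:
  fixes p :: "'a \<Rightarrow> real"
  assumes A: "finite A"
    and per_class: "\<And>\<sigma>. \<sigma> \<in> A \<Longrightarrow>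
      (\<Sum>\<tau>\<in>{\<tau>\<in>A. key \<tau> = key \<sigma> \<and> Q \<tau>}. p \<tau>) = r * (\<Sum>\<tau>\<in>{\<tau>\<in>A. key \<tau> = key \<sigma>}. p \<tau>)"
  shows "(\<Sum>\<tau>\<in>{\<tau>\<in>A. Q \<tau>}. p \<tau>) = r * (\<Sum>\<tau>\<in>A. p \<tau>)"
proof -
  have "(\<Sum>\<tau>\<in>{\<tau>\<in>A. Q \<tau>}. p \<tau>) = (\<Sum>y\<in>key ` A. \<Sum>\<tau>\<in>{x\<in>{\<tau>\<in>A. Q \<tau>}. key x = y}. p \<tau>)"
    using A by (intro sum.group[symmetric]) auto
  also have "\<dots> = (\<Sum>y\<in>key ` A. r * (\<Sum>\<tau>\<in>{x\<in>A. key x = y}. p \<tau>))"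
  proof (rule sum.cong[OF refl])
    fix y assume "y \<in> key ` A"
    then obtain \<sigma> where s: "\<sigma> \<in> A" "y = key \<sigma>" by blast
    have "{x\<in>{\<tau>\<in>A. Q \<tau>}. key x = y} = {\<tau>\<in>A. key \<tau> = key \<sigma> \<and> Q \<tau>}"
         "{x\<in>A. key x = y} = {\<tau>\<in>A. key \<tau> = key \<sigma>}" using s by auto
    thus "(\<Sum>\<tau>\<in>{x\<in>{\<tau>\<in>A. Q \<tau>}. key x = y}. p \<tau>) = r * (\<Sum>\<tau>\<in>{x\<in>A. key x = y}. p \<tau>)"
      using per_class[OF s(1)] by simp
  qed
  also have "\<dots> = r * (\<Sum>\<tau>\<in>A. p \<tau>)"
    using A by (simp add: sum_distrib_left[symmetric] sum.group)
  finally show ?thesis .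
qed

lemma Pr_pos:
  assumes sp: "strictly_positive n p" and s: "\<sigma> \<in> Sym n" and ev: "Ev \<sigma>"
  shows "Pr n p Ev > 0"
proof -
  have "0 < p \<sigma>" using sp s by (simp add: strictly_positive_def)
  also have "p \<sigma> \<le> (\<Sum>\<tau>\<in>{\<tau>\<in>Sym n. Ev \<tau>}. p \<tau>)"
    using s ev sp finite_Sym
    by (intro member_le_sum) (auto simp: strictly_positive_def intro: less_imp_le)
  finally show ?thesis by (simp add: Pr_def)
qed

text \<open>Fix k and \<pi>.  Splitting the
  sum for log p at k, p(\<sigma>) = exp (head \<sigma>) \<cdot> exp (tail \<sigma>), where head \<sigma> depends on the tuple
  (\<sigma> 1,...,\<sigma> k) and tail \<sigma> only on the set \<sigma>{1..k} and on \<sigma>(k+1),...,\<sigma>(n).  Swapping the first k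
  entries (graft) maps the permutations with prefix tuple \<rho> bijectively onto those with prefix
  tuple \<pi>, preserving tail; so the conditional law of \<Pi>(k+1) given the tuple is the same for
  every tuple with the set \<pi>{1..k}, hence equals the conditional law given that set.\<close>

locale sequential_factorisation =
  fixes n :: nat and p :: "perm \<Rightarrow> real" and w :: "nat \<Rightarrow> nat set \<Rightarrow> nat \<Rightarrow> real"
    and k :: nat and \<pi> :: perm
  assumes sp: "strictly_positive n p"
    and log_seq: "\<forall>\<sigma>\<in>Sym n. ln (p \<sigma>) = (\<Sum>m\<in>{1..n}. w m (\<sigma> ` {1..<m}) (\<sigma> m))"
    and k: "k \<le> n" and pi: "\<pi> \<in> Sym n"
begin

definition head :: "perm \<Rightarrow> real" where
  "head \<sigma> = (\<Sum>m\<in>{1..k}. w m (\<sigma> ` {1..<m}) (\<sigma> m))"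

definition tail :: "perm \<Rightarrow> real" where
  "tail \<sigma> = (\<Sum>m\<in>{k<..n}. w m (\<sigma> ` {1..<m}) (\<sigma> m))"

definition graft :: "perm \<Rightarrow> perm \<Rightarrow> perm" where
  "graft \<rho> \<sigma> = (\<lambda>x. if x \<in> {1..k} then \<rho> x else \<sigma> x)"

definition tail_mass :: "(nat \<Rightarrow> bool) \<Rightarrow> real" where
  "tail_mass Q = (\<Sum>\<sigma>\<in>{\<sigma>\<in>Sym n. Q (\<sigma> (k+1)) \<and> (\<forall>i\<in>{1..k}. \<sigma> i = \<pi> i)}. exp (tail \<sigma>))"

definition tail_cond :: "(nat \<Rightarrow> bool) \<Rightarrow> real" where
  "tail_cond Q = tail_mass Q / tail_mass (\<lambda>_. True)"

lemma p_factor: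
  assumes s: "\<sigma> \<in> Sym n"
  shows "p \<sigma> = exp (head \<sigma>) * exp (tail \<sigma>)"
proof -
  have "{1..n} = {1..k} \<union> {k<..n}" using k by auto
  hence "ln (p \<sigma>) = head \<sigma> + tail \<sigma>"
    using log_seq s by (simp add: head_def tail_def sum.union_disjoint ivl_disj_int)
  hence "exp (ln (p \<sigma>)) = exp (head \<sigma> + tail \<sigma>)" by simp
  thus ?thesis using sp s by (simp add: strictly_positive_def exp_add)
qed

lemma head_eq:
  assumes "\<forall>i\<in>{1..k}. \<tau> i = \<rho> i"
  shows "head \<tau> = head \<rho>"
proof -
  have "\<tau> ` {1..<m} = \<rho> ` {1..<m} \<and> \<tau> m = \<rho> m" if "m \<in> {1..k}" for m
    using that assms by (auto intro!: image_cong)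
  thus ?thesis unfolding head_def by simp
qed

lemma tail_eq:
  assumes out: "\<forall>i. i \<notin> {1..k} \<longrightarrow> \<tau> i = \<sigma> i" and pre: "\<tau> ` {1..k} = \<sigma> ` {1..k}"
  shows "tail \<tau> = tail \<sigma>"
proof -
  have "\<tau> ` {1..<m} = \<sigma> ` {1..<m} \<and> \<tau> m = \<sigma> m" if m: "m \<in> {k<..n}" for m
  proof -
    have "{1..<m} = {1..k} \<union> {k<..<m}" using m by auto
    moreover have "\<tau> ` {k<..<m} = \<sigma> ` {k<..<m}" using out by (intro image_cong) auto
    ultimately show ?thesis using pre m out by (simp add: image_Un)
  qed
  thus ?thesis unfolding tail_def by simp
qed

text \<open>Grafting the first k entries of \<rho> onto the permutations with prefix tuple \<pi> is a
  bijection onto the permutations with prefix tuple \<rho>; it changes only the head factor.\<close>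

lemma tuple_mass:
  assumes r: "\<rho> \<in> Sym n" and r_set: "\<rho> ` {1..k} = \<pi> ` {1..k}"
  shows "Pr n p (\<lambda>\<tau>. Q (\<tau> (k+1)) \<and> (\<forall>i\<in>{1..k}. \<tau> i = \<rho> i)) = exp (head \<rho>) * tail_mass Q"
proof -
  let ?S = "{\<tau>\<in>Sym n. Q (\<tau> (k+1)) \<and> (\<forall>i\<in>{1..k}. \<tau> i = \<rho> i)}"
  let ?T = "{\<sigma>\<in>Sym n. Q (\<sigma> (k+1)) \<and> (\<forall>i\<in>{1..k}. \<sigma> i = \<pi> i)}"
  have img: "\<tau> ` {1..k} = \<rho> ` {1..k}" if "\<forall>i\<in>{1..k}. \<tau> i = \<rho> i" for \<tau> \<rho> :: perm
    using that by (intro image_cong) auto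
  have "(\<Sum>\<tau>\<in>?S. p \<tau>) = (\<Sum>\<sigma>\<in>?T. exp (head \<rho>) * exp (tail \<sigma>))"
  proof (rule sum.reindex_bij_witness[where i = "graft \<rho>" and j = "graft \<pi>"])
    fix a assume a: "a \<in> ?S"
    show "graft \<rho> (graft \<pi> a) = a" using a by (auto simp: graft_def fun_eq_iff)
    have ea: "\<pi> ` {1..k} = a ` {1..k}" using img[of a \<rho>] a r_set by auto
    have "graft \<pi> a \<in> Sym n" unfolding graft_def by (rule splice_Sym[OF pi _ k ea]) (use a in simp)
    thus "graft \<pi> a \<in> ?T" using a by (auto simp: graft_def)
    have "graft \<pi> a ` {1..k} = \<pi> ` {1..k}" by (intro image_cong) (auto simp: graft_def)
    hence "tail (graft \<pi> a) = tail a" using ea by (intro tail_eq) (auto simp: graft_def)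
    moreover have "head a = head \<rho>" using a by (intro head_eq) auto
    ultimately show "exp (head \<rho>) * exp (tail (graft \<pi> a)) = p a" using p_factor a by simp
  next
    fix b assume b: "b \<in> ?T"
    show "graft \<pi> (graft \<rho> b) = b" using b by (auto simp: graft_def fun_eq_iff)
    have eb: "\<rho> ` {1..k} = b ` {1..k}" using img[of b \<pi>] b r_set by auto
    have "graft \<rho> b \<in> Sym n" unfolding graft_def by (rule splice_Sym[OF r _ k eb]) (use b in simp)
    thus "graft \<rho> b \<in> ?S" using b by (auto simp: graft_def)
  qed
  thus ?thesis by (simp add: Pr_def tail_mass_def sum_distrib_left)
qed

text \<open>The conditional probability of Q(\<Pi>(k+1)), given any prefix tuple with the set \<pi>{1..k},
  is tail_cond Q; hence it is also the conditional probability given that set.\<close>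

lemma tuple_cond:
  assumes r: "\<rho> \<in> Sym n" and r_set: "\<rho> ` {1..k} = \<pi> ` {1..k}"
  shows "Pr n p (\<lambda>\<tau>. Q (\<tau> (k+1)) \<and> (\<forall>i\<in>{1..k}. \<tau> i = \<rho> i))
       = tail_cond Q * Pr n p (\<lambda>\<tau>. \<forall>i\<in>{1..k}. \<tau> i = \<rho> i)"
proof -
  have "exp (tail \<pi>) \<le> tail_mass (\<lambda>_. True)"
    unfolding tail_mass_def using pi finite_Sym by (intro member_le_sum) auto
  hence "tail_mass (\<lambda>_. True) > 0" using exp_gt_zero[of "tail \<pi>"] by linarith
  thus ?thesis using tuple_mass[OF r r_set, of Q] tuple_mass[OF r r_set, of "\<lambda>_. True"]
    by (simp add: tail_cond_def)
qed

lemma set_cond: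
  "Pr n p (\<lambda>\<tau>. Q (\<tau> (k+1)) \<and> \<tau> ` {1..k} = \<pi> ` {1..k})
     = tail_cond Q * Pr n p (\<lambda>\<tau>. \<tau> ` {1..k} = \<pi> ` {1..k})"
proof -
  define A where "A = {\<sigma>\<in>Sym n. \<sigma> ` {1..k} = \<pi> ` {1..k}}"
  have "(\<Sum>\<tau>\<in>{\<tau>\<in>A. Q (\<tau> (k+1))}. p \<tau>) = tail_cond Q * (\<Sum>\<tau>\<in>A. p \<tau>)"
  proof (rule sum_ratio_by_classes[where key = "\<lambda>\<tau>. restrict \<tau> {1..k}"])
    show "finite A" using finite_Sym by (simp add: A_def)
    fix \<sigma> assume "\<sigma> \<in> A"
    hence s: "\<sigma> \<in> Sym n" "\<sigma> ` {1..k} = \<pi> ` {1..k}" by (auto simp: A_def)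
    let ?same = "\<lambda>\<tau>. restrict \<tau> {1..k} = restrict \<sigma> {1..k}"
    have same: "?same \<tau> \<longleftrightarrow> (\<forall>i\<in>{1..k}. \<tau> i = \<sigma> i)" for \<tau> :: perm
      by (metis restrict_apply' restrict_ext)
    have img: "\<tau> ` {1..k} = \<sigma> ` {1..k}" if "\<forall>i\<in>{1..k}. \<tau> i = \<sigma> i" for \<tau>
      using that by (intro image_cong) auto
    have "{\<tau>\<in>A. ?same \<tau> \<and> Q (\<tau> (k+1))} = {\<tau>\<in>Sym n. Q (\<tau> (k+1)) \<and> (\<forall>i\<in>{1..k}. \<tau> i = \<sigma> i)}"
         "{\<tau>\<in>A. ?same \<tau>} = {\<tau>\<in>Sym n. \<forall>i\<in>{1..k}. \<tau> i = \<sigma> i}"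
      unfolding same using img s by (auto simp: A_def)
    thus "(\<Sum>\<tau>\<in>{\<tau>\<in>A. ?same \<tau> \<and> Q (\<tau> (k+1))}. p \<tau>) = tail_cond Q * (\<Sum>\<tau>\<in>{\<tau>\<in>A. ?same \<tau>}. p \<tau>)"
      using tuple_cond[OF s, of Q] by (simp add: Pr_def)
  qed
  moreover have "{\<tau>\<in>A. Q (\<tau> (k+1))} = {\<tau>\<in>Sym n. Q (\<tau> (k+1)) \<and> \<tau> ` {1..k} = \<pi> ` {1..k}}"
    by (auto simp: A_def)
  ultimately show ?thesis by (simp add: Pr_def A_def)
qed

end

text \<open>Part (3), first direction: with Q the event \<Pi>(k+1) = \<pi>(k+1), both conditional
  probabilities of the definition equal tail_cond Q.\<close>

theorem sequential_imp_L_decomposable: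
  assumes sp: "strictly_positive n p"
    and log_seq: "\<forall>\<sigma>\<in>Sym n. ln (p \<sigma>) = (\<Sum>m\<in>{1..n}. w m (\<sigma> ` {1..<m}) (\<sigma> m))"
  shows "L_decomposable n p"
  unfolding L_decomposable_def
proof (intro allI impI, elim conjE)
  fix k \<pi> assume k: "2 \<le> k" "k \<le> n - 2" and pi: "\<pi> \<in> Sym n"
  have "k \<le> n" using k by linarith
  then interpret sequential_factorisation n p w k \<pi> using sp log_seq pi by unfold_locales
  let ?Q = "\<lambda>x. x = \<pi> (k+1)"
  have "Pr n p (\<lambda>\<tau>. \<forall>i\<in>{1..k}. \<tau> i = \<pi> i) > 0" "Pr n p (\<lambda>\<tau>. \<tau> ` {1..k} = \<pi> ` {1..k}) > 0"
    using Pr_pos[OF sp pi] by auto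
  thus "cond_Pr n p (\<lambda>\<sigma>. \<sigma> (k+1) = \<pi> (k+1)) (\<lambda>\<sigma>. \<forall>i\<in>{1..k}. \<sigma> i = \<pi> i)
      = cond_Pr n p (\<lambda>\<sigma>. \<sigma> (k+1) = \<pi> (k+1)) (\<lambda>\<sigma>. \<sigma> ` {1..k} = \<pi> ` {1..k})"
    using tuple_cond[OF pi refl, of ?Q] set_cond[of ?Q] by (simp add: cond_Pr_def)
qed

text \<open>With
  prefix_prob k \<pi> = P(\<Pi>(1..k) = \<pi>(1..k)), ln p(\<pi>) telescopes into the terms
  log_cond k \<pi> = ln P(\<Pi>(k+1) = \<pi>(k+1) | \<Pi>(1..k) = \<pi>(1..k)), k < n, each of which depends only
  on \<pi>{1..k} and \<pi>(k+1).\<close>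

definition prefix_prob :: "nat \<Rightarrow> (perm \<Rightarrow> real) \<Rightarrow> nat \<Rightarrow> perm \<Rightarrow> real" where
  "prefix_prob n p k \<pi> = Pr n p (\<lambda>\<sigma>. \<forall>i\<in>{1..k}. \<sigma> i = \<pi> i)"

definition log_cond :: "nat \<Rightarrow> (perm \<Rightarrow> real) \<Rightarrow> nat \<Rightarrow> perm \<Rightarrow> real" where
  "log_cond n p k \<pi> = ln (prefix_prob n p (Suc k) \<pi>) - ln (prefix_prob n p k \<pi>)"

lemma prefix_prob_pos: "strictly_positive n p \<Longrightarrow> \<pi> \<in> Sym n \<Longrightarrow> prefix_prob n p k \<pi> > 0"
  unfolding prefix_prob_def by (rule Pr_pos) auto

lemma log_cond_eq_ln_cond_Pr:
  assumes sp: "strictly_positive n p" and pi: "\<pi> \<in> Sym n"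
  shows "log_cond n p k \<pi> =
    ln (cond_Pr n p (\<lambda>\<tau>. \<tau> (k+1) = \<pi> (k+1)) (\<lambda>\<tau>. \<forall>i\<in>{1..k}. \<tau> i = \<pi> i))"
proof -
  have "(\<lambda>\<tau>. \<forall>i\<in>{1..Suc k}. \<tau> i = \<pi> i) = (\<lambda>\<tau>. \<tau> (k+1) = \<pi> (k+1) \<and> (\<forall>i\<in>{1..k}. \<tau> i = \<pi> i))"
    by (auto simp: le_Suc_eq fun_eq_iff)
  thus ?thesis
    using prefix_prob_pos[OF sp pi, of k] prefix_prob_pos[OF sp pi, of "Suc k"]
    by (simp add: log_cond_def prefix_prob_def cond_Pr_def ln_div)
qed

text \<open>ln p(\<pi>) telescopes: prefix_prob 0 = 1 and prefix_prob n \<pi> = p(\<pi>).\<close>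

lemma log_telescope:
  assumes sp: "strictly_positive n p" and pi: "\<pi> \<in> Sym n"
  shows "ln (p \<pi>) = (\<Sum>m\<in>{1..n}. log_cond n p (m - 1) \<pi>)"
proof -
  have first: "prefix_prob n p 0 \<pi> = 1"
    using sp by (simp add: prefix_prob_def Pr_def strictly_positive_def distribution_def)
  have "{\<sigma>\<in>Sym n. \<forall>i\<in>{1..n}. \<sigma> i = \<pi> i} = {\<pi>}" using Sym_eqI[OF pi] pi by auto
  hence last: "prefix_prob n p n \<pi> = p \<pi>" by (simp add: prefix_prob_def Pr_def)
  have "(\<Sum>m\<in>{1..n}. log_cond n p (m - 1) \<pi>) = (\<Sum>k<n. log_cond n p k \<pi>)"
    by (simp only: image_Suc_lessThan[symmetric] sum.reindex inj_Suc comp_def diff_Suc_1)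
  also have "\<dots> = ln (prefix_prob n p n \<pi>) - ln (prefix_prob n p 0 \<pi>)"
    unfolding log_cond_def by (rule sum_lessThan_telescope)
  finally show ?thesis using first last by simp
qed

text \<open>The last conditional is trivial: the first n - 1 values determine the permutation.\<close>

lemma log_cond_last:
  assumes pi: "\<pi> \<in> Sym n" and n: "n \<ge> 1"
  shows "log_cond n p (n - 1) \<pi> = 0"
proof -
  have "{\<tau>\<in>Sym n. \<forall>i\<in>{1..n}. \<tau> i = \<pi> i} = {\<tau>\<in>Sym n. \<forall>i\<in>{1..n - 1}. \<tau> i = \<pi> i}"
    using Sym_eqI_init[OF pi] by force
  thus ?thesis using n by (simp add: log_cond_def prefix_prob_def Pr_def)
qed

lemma tuple_event_eq_set_event:
  fixes k :: nat and \<tau> \<pi> :: perm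
  assumes "k \<le> 1"
  shows "(\<lambda>\<tau>. \<forall>i\<in>{1..k}. \<tau> i = \<pi> i) = (\<lambda>\<tau>. \<tau> ` {1..k} = \<pi> ` {1..k})"
  using assms by (cases "k = 0") (auto simp: le_Suc_eq fun_eq_iff)

text \<open>Under L-decomposability, log_cond k \<pi> depends only on \<pi>{1..k} and \<pi>(k+1): for k \<le> 1 or
  2 \<le> k \<le> n - 2 it is the conditional given the set, and for k = n - 1 it is 0.\<close>

lemma log_cond_invariant:
  assumes sp: "strictly_positive n p" and L: "L_decomposable n p" and kn: "k < n"
    and pi: "\<pi> \<in> Sym n" and si: "\<sigma> \<in> Sym n"
    and same_set: "\<pi> ` {1..k} = \<sigma> ` {1..k}" and same_next: "\<pi> (k+1) = \<sigma> (k+1)"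
  shows "log_cond n p k \<pi> = log_cond n p k \<sigma>"
proof (cases "k = n - 1")
  case True thus ?thesis using log_cond_last[OF pi] log_cond_last[OF si] kn by simp
next
  case False
  hence k: "k \<le> 1 \<or> 2 \<le> k \<and> k \<le> n - 2" using kn by linarith
  have "log_cond n p k \<rho> =
      ln (cond_Pr n p (\<lambda>\<tau>. \<tau> (k+1) = \<rho> (k+1)) (\<lambda>\<tau>. \<tau> ` {1..k} = \<rho> ` {1..k}))"
    if r: "\<rho> \<in> Sym n" for \<rho>
  proof -
    have "Pr n p (\<lambda>\<tau>. \<forall>i\<in>{1..k}. \<tau> i = \<rho> i) > 0" by (rule Pr_pos[OF sp r]) simp
    hence "cond_Pr n p (\<lambda>\<tau>. \<tau> (k+1) = \<rho> (k+1)) (\<lambda>\<tau>. \<forall>i\<in>{1..k}. \<tau> i = \<rho> i)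
        = cond_Pr n p (\<lambda>\<tau>. \<tau> (k+1) = \<rho> (k+1)) (\<lambda>\<tau>. \<tau> ` {1..k} = \<rho> ` {1..k})"
      using k L r tuple_event_eq_set_event[of k \<rho>] unfolding L_decomposable_def by auto
    thus ?thesis using log_cond_eq_ln_cond_Pr[OF sp r] by simp
  qed
  thus ?thesis using pi si same_set same_next by simp
qed

text \<open>Part (3), second direction: w m S j is log_cond (m - 1) at any permutation realising
  (S, j) at position m.\<close>

theorem L_decomposable_imp_sequential:
  assumes sp: "strictly_positive n p" and L: "L_decomposable n p"
  shows "\<exists>w. \<forall>\<sigma>\<in>Sym n. ln (p \<sigma>) = (\<Sum>m\<in>{1..n}. w m (\<sigma> ` {1..<m}) (\<sigma> m))"
proof -
  define pick where "pick m S j = (SOME \<sigma>. \<sigma> \<in> Sym n \<and> \<sigma> ` {1..<m} = S \<and> \<sigma> m = j)" for m S j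
  define w where "w m S j = log_cond n p (m - 1) (pick m S j)" for m S j
  have "log_cond n p (m - 1) \<sigma> = w m (\<sigma> ` {1..<m}) (\<sigma> m)" if s: "\<sigma> \<in> Sym n" and m: "m \<in> {1..n}"
    for \<sigma> m
  proof -
    let ?r = "pick m (\<sigma> ` {1..<m}) (\<sigma> m)"
    have r: "?r \<in> Sym n \<and> ?r ` {1..<m} = \<sigma> ` {1..<m} \<and> ?r m = \<sigma> m"
      unfolding pick_def by (rule someI[of _ \<sigma>]) (simp add: s)
    have "{1..<m} = {1..m - 1}" "m - 1 + 1 = m" using m by auto
    hence "log_cond n p (m - 1) \<sigma> = log_cond n p (m - 1) ?r"
      using r m by (intro log_cond_invariant[OF sp L _ s]) auto
    thus ?thesis by (simp add: w_def)
  qed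
  hence "\<forall>\<sigma>\<in>Sym n. ln (p \<sigma>) = (\<Sum>m\<in>{1..n}. w m (\<sigma> ` {1..<m}) (\<sigma> m))"
    using log_telescope[OF sp] by simp
  thus ?thesis by blast
qed

lemma logp_in_seq_space_iff:
  "logp n p \<in> seq_space n \<longleftrightarrow>
     (\<exists>w. \<forall>\<sigma>\<in>Sym n. ln (p \<sigma>) = (\<Sum>m\<in>{1..n}. w m (\<sigma> ` {1..<m}) (\<sigma> m)))"
  by (simp add: seq_space_def vecs_def logp_def)

theorem L_decomposable_eq_loglinear_model:
  "{p. strictly_positive n p \<and> L_decomposable n p}
     = loglinear_model n ((\<lambda>k. (Phi n k, Psi n)) ` {1..n})"
  unfolding loglinear_model_def U_model_eq_seq_space logp_in_seq_space_iff
  using L_decomposable_imp_sequential sequential_imp_L_decomposable by blast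

theorem mainTheorem4:
  fixes n :: nat
  assumes "n \<ge> 1"
  shows "{p. strictly_positive n p \<and> L_decomposable n p}
           = loglinear_model n ((\<lambda>k. (Phi n k, Psi n)) ` {1..n})
         \<and> int (fdim (U_model n ((\<lambda>k. (Phi n k, Psi n)) ` {1..n}))) - 1
           = (\<Sum>k=2..n. int (n choose k) * (int k - 1))
         \<and> real_of_int (\<Sum>k=2..n. int (n choose k) * (int k - 1)) = 2 ^ n * (real n / 2 - 1) + 1"
proof (intro conjI)
  show "{p. strictly_positive n p \<and> L_decomposable n p}
          = loglinear_model n ((\<lambda>k. (Phi n k, Psi n)) ` {1..n})"
    by (rule L_decomposable_eq_loglinear_model)
  show "int (fdim (U_model n ((\<lambda>k. (Phi n k, Psi n)) ` {1..n}))) - 1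
          = (\<Sum>k=2..n. int (n choose k) * (int k - 1))"
    unfolding U_model_eq_seq_space using dim_seq_space[OF assms] card_nonmax_pairs_int[of n]
    by simp
  show "real_of_int (\<Sum>k=2..n. int (n choose k) * (int k - 1)) = 2 ^ n * (real n / 2 - 1) + 1"
    by (rule nonmax_count_closed_form[OF assms])
qed

end
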